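(* Let $k\geq 1$ and let $\zeta_1,\dots,\zeta_k\in(0,1)$ be real numbers such that $1,\zeta_1,\dots,\zeta_k$ are linearly independent over $\mathbb{Q}$. With the sequences $b_n^{(s)}$, $b_n^{\prime(s)}$ defined in the context, $$\widehat{\omega}\geq\max\left\{\sup_{s\ge2}\liminf_{n\to\infty}\max_{1\le j\le n}\frac{b^{(s)}_{j+1}-b^{(s)}_j-1}{b^{(s)}_{n+1}},\ \sup_{s\ge2}\liminf_{n\to\infty}\max_{1\le j\le n}\frac{b^{\prime(s)}_{j+1}-b^{\prime(s)}_j-1}{b^{\prime(s)}_{n+1}}\right\}.$$
   Context: For $X>0$ let $\omega_1(X)$ be the supremum of all real $\nu$ such that $|x|\leq X$, $|\zeta_i x-y_i|\leq X^{-\nu}$ ($1\le i\le k$) has a nonzero solution $(x,y_1,\dots,y_k)\in\mathbb{Z}^{k+1}$; $\widehat\omega=\liminf_{X\to\infty}\omega_1(X)$. For an integer $s\ge2$, let $a_1^{i,(s)}<a_2^{i,(s)}<\cdots$ be the positions (after the point) of the nonzero digits in the base-$s$ expansion of $\zeta_i$, and $a_1^{\prime i,(s)}<a_2^{\prime i,(s)}<\cdots$ those of $1-\zeta_i$. Let $(b_n^{(s)})_{n\ge1}$ be the increasing enumeration of $\{a_n^{i,(s)}:1\le i\le k, n\ge1\}$ and $(b_n^{\prime(s)})_{n\ge1}$ the increasing enumeration of $\{a_n^{\prime i,(s)}:1\le i\le k,n\ge1\}$. *)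

theory Defs
  imports "HOL-Analysis.Analysis" "HOL-Library.Infinite_Set" "HOL-Library.Liminf_Limsup"
begin

definition omega1 :: "nat \<Rightarrow> (nat \<Rightarrow> real) \<Rightarrow> real \<Rightarrow> ereal" where
  "omega1 k \<zeta> X = Sup (ereal ` {\<nu>::real. \<exists>(x::int) (y::nat \<Rightarrow> int).
      (x \<noteq> 0 \<or> (\<exists>i\<in>{1..k}. y i \<noteq> 0)) \<and> \<bar>real_of_int x\<bar> \<le> X \<and>
      (\<forall>i\<in>{1..k}. \<bar>\<zeta> i * real_of_int x - real_of_int (y i)\<bar> \<le> X powr (-\<nu>))})"

definition omega_hat :: "nat \<Rightarrow> (nat \<Rightarrow> real) \<Rightarrow> ereal" where
  "omega_hat k \<zeta> = Liminf at_top (omega1 k \<zeta>)"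

text \<open>n-th digit (n >= 1, after the point) of the base-s expansion of z in (0,1).\<close>
definition digit :: "nat \<Rightarrow> real \<Rightarrow> nat \<Rightarrow> int" where
  "digit s z n = \<lfloor>real s ^ n * z\<rfloor> mod int s"

definition digit_positions :: "nat \<Rightarrow> nat \<Rightarrow> (nat \<Rightarrow> real) \<Rightarrow> nat set" where
  "digit_positions s k f = {n. n \<ge> 1 \<and> (\<exists>i\<in>{1..k}. digit s (f i) n \<noteq> 0)}"

text \<open>1-indexed increasing enumeration b_1 < b_2 < ...\<close>
definition bseq :: "nat \<Rightarrow> nat \<Rightarrow> (nat \<Rightarrow> real) \<Rightarrow> nat \<Rightarrow> nat" where
  "bseq s k f n = enumerate (digit_positions s k f) (n - 1)"

definition gap_quantity :: "nat \<Rightarrow> (nat \<Rightarrow> real) \<Rightarrow> ereal" where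
  "gap_quantity k f = (SUP s\<in>{2..}. Liminf sequentially (\<lambda>n.
      ereal (Max {(real (bseq s k f (j+1)) - real (bseq s k f j) - 1) / real (bseq s k f (n+1))
                 | j. 1 \<le> j \<and> j \<le> n})))"

end

theory Submission
  imports Defs
begin

text \<open>
  If b_j < b_(j+1) are consecutive positions of nonzero base-s digits, every \<zeta>_i has zero digits
  at the g = b_(j+1) - b_j - 1 positions in between, so x = s^(b_j) satisfies
  \<parallel>x \<zeta>_i\<parallel> < s^(-g) for all i. For s^(b_n) \<le> X \<le> s^(b_(n+1)) and j \<le> n this gives
  \<omega>_1(X) \<ge> g / b_(n+1), and every large X lies in such an interval. Irrationality of \<zeta>_1
  makes the set of digit positions infinite, and \<omega>_1 is invariant under \<zeta> \<mapsto> 1 - \<zeta>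
  (replace y_i by x - y_i).
\<close>

lemma floor_power_Suc_mult:
  assumes "s > 0"
  shows "\<lfloor>real s ^ Suc q * z\<rfloor> = int s * \<lfloor>real s ^ q * z\<rfloor> + digit s z (Suc q)"
proof -
  define w where "w = real s ^ q * z"
  have "\<lfloor>real s * w\<rfloor> div int s = \<lfloor>real_of_int \<lfloor>real s * w\<rfloor> / real s\<rfloor>"
    by (metis floor_divide_of_int_eq of_int_of_nat_eq)
  also have "\<dots> = \<lfloor>w\<rfloor>"
    using assms by (metis floor_divide_real_eq_div floor_of_int of_int_of_nat_eq
        of_nat_0_le_iff nonzero_mult_div_cancel_left of_nat_0_less_iff less_irrefl)
  finally show ?thesis
    unfolding digit_def w_def by (metis div_mult_mod_eq mult.commute power_Suc mult.assoc)
qed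

lemma floor_power_add_mult_if_zero_digits:
  assumes "s > 0" and "\<And>p. n < p \<Longrightarrow> p \<le> n + g \<Longrightarrow> digit s z p = 0"
  shows "\<lfloor>real s ^ (n + g) * z\<rfloor> = int s ^ g * \<lfloor>real s ^ n * z\<rfloor>"
  using assms(2)
proof (induction g)
  case (Suc g)
  then show ?case
    using floor_power_Suc_mult[OF assms(1), of "n + g" z] by simp
qed simp

lemma frac_power_mult_if_zero_digits:
  assumes "s > 0" and "\<And>p. n < p \<Longrightarrow> p \<le> n + g \<Longrightarrow> digit s z p = 0"
  shows "frac (real s ^ n * z) * real s ^ g < 1"
proof -
  have "real_of_int \<lfloor>real s ^ (n + g) * z\<rfloor> = real s ^ g * of_int \<lfloor>real s ^ n * z\<rfloor>"
    using floor_power_add_mult_if_zero_digits[of s n g z, OF assms] by simp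
  then have "frac (real s ^ n * z) * real s ^ g = frac (real s ^ (n + g) * z)"
    by (simp add: frac_def algebra_simps power_add)
  then show ?thesis by (simp add: frac_lt_1)
qed

lemma irrational_imp_infinite_nonzero_digits:
  assumes "s \<ge> 2" and "z \<notin> \<rat>"
  shows "infinite {p. digit s z p \<noteq> 0}"
proof
  assume "finite {p. digit s z p \<noteq> 0}"
  then obtain N where N: "\<And>p. digit s z p \<noteq> 0 \<Longrightarrow> p \<le> N"
    using finite_nat_set_iff_bounded_le by auto
  have small: "frac (real s ^ N * z) * real s ^ g < 1" for g
    using assms(1) N by (intro frac_power_mult_if_zero_digits) force+
  have "frac (real s ^ N * z) = 0"
  proof (rule ccontr)
    assume "frac (real s ^ N * z) \<noteq> 0"
    then have pos: "frac (real s ^ N * z) > 0" using frac_ge_0 by (metis order_le_less)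
    obtain g where "1 / frac (real s ^ N * z) < real s ^ g"
      using real_arch_pow[of "real s"] assms(1) by auto
    then show False using small[of g] pos by (simp add: field_simps)
  qed
  then obtain m where "real s ^ N * z = of_int m"
    by (auto elim: Ints_cases)
  then have "z = of_int m / real s ^ N"
    using assms(1) by (simp add: field_simps)
  then show False using assms(2) by simp
qed

lemma digit_positions_infinite:
  assumes "s \<ge> 2" and "1 \<le> k" and "f 1 \<notin> \<rat>"
  shows "infinite (digit_positions s k f)"
proof -
  have "{p. digit s (f 1) p \<noteq> 0} \<subseteq> insert 0 (digit_positions s k f)"
    using assms(2) by (auto simp: digit_positions_def)
  then show ?thesis
    using irrational_imp_infinite_nonzero_digits[OF assms(1,3)] finite_subset by auto
qed

lemma not_in_between_enumerate:
  fixes S :: "nat set"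
  assumes "infinite S" and "enumerate S m < p" and "p < enumerate S (Suc m)"
  shows "p \<notin> S"
  using assms Least_le[of "\<lambda>q. q \<in> S \<and> enumerate S m < q" p]
  by (auto simp: enumerate_Suc''[OF assms(1)])

lemma
  assumes "infinite (digit_positions s k f)"
  shows bseq_Suc: "bseq s k f (Suc n) = enumerate (digit_positions s k f) n"
    and bseq_pos: "bseq s k f n \<ge> 1"
    and bseq_less_iff: "1 \<le> j \<Longrightarrow> 1 \<le> n \<Longrightarrow> bseq s k f j < bseq s k f n \<longleftrightarrow> j < n"
  using enumerate_in_set[OF assms] assms
  by (auto simp: bseq_def digit_positions_def)

lemma digit_zero_between_bseq:
  assumes "infinite (digit_positions s k f)" and "i \<in> {1..k}" and "1 \<le> j"
    and "bseq s k f j < p" and "p < bseq s k f (Suc j)"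
  shows "digit s (f i) p = 0"
proof -
  have "p \<notin> digit_positions s k f"
    using not_in_between_enumerate[OF assms(1), of "j - 1" p] assms(3-5)
    by (simp add: bseq_def)
  then show ?thesis using assms(2,4) by (auto simp: digit_positions_def)
qed

lemma omega1_ge_if_zero_digits:
  assumes "s \<ge> 2"
    and "\<And>i p. i \<in> {1..k} \<Longrightarrow> m < p \<Longrightarrow> p \<le> m + g \<Longrightarrow> digit s (f i) p = 0"
    and "real s ^ m \<le> X" and "X powr \<nu> \<le> real s ^ g"
  shows "ereal \<nu> \<le> omega1 k f X"
proof -
  have "real s ^ m > 0" using assms(1) by simp
  then have "X > 0" using assms(3) by linarith
  have approx: "\<bar>f i * real_of_int (int s ^ m) - of_int \<lfloor>real s ^ m * f i\<rfloor>\<bar> \<le> X powr - \<nu>"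
    if i: "i \<in> {1..k}" for i
  proof -
    have "frac (real s ^ m * f i) * real s ^ g < 1"
      using assms(1) assms(2)[OF i] by (intro frac_power_mult_if_zero_digits) auto
    then have "frac (real s ^ m * f i) < 1 / real s ^ g"
      using assms(1) by (simp add: field_simps)
    also have "\<dots> \<le> 1 / X powr \<nu>"
      using assms(1,4) \<open>X > 0\<close> by (intro divide_left_mono) auto
    finally show ?thesis
      by (simp add: frac_def powr_minus_divide mult.commute)
  qed
  have "\<exists>(x::int) (y::nat \<Rightarrow> int). (x \<noteq> 0 \<or> (\<exists>i\<in>{1..k}. y i \<noteq> 0)) \<and>
      \<bar>real_of_int x\<bar> \<le> X \<and> (\<forall>i\<in>{1..k}. \<bar>f i * real_of_int x - real_of_int (y i)\<bar> \<le> X powr (-\<nu>))"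
  proof (intro exI conjI)
    show "int s ^ m \<noteq> 0 \<or> (\<exists>i\<in>{1..k}. \<lfloor>real s ^ m * f i\<rfloor> \<noteq> 0)"
      using assms(1) by simp
    show "\<bar>real_of_int (int s ^ m)\<bar> \<le> X" using assms(3) by simp
  qed (use approx in blast)
  then show ?thesis unfolding omega1_def by (intro Sup_upper imageI CollectI)
qed

lemma max_gap_ratio_le_omega1:
  assumes s: "s \<ge> 2" and inf: "infinite (digit_positions s k f)" and n: "1 \<le> n"
    and X: "real s ^ bseq s k f n \<le> X" "X \<le> real s ^ bseq s k f (n + 1)"
  shows "ereal (Max {(real (bseq s k f (j+1)) - real (bseq s k f j) - 1) / real (bseq s k f (n+1))
                     | j. 1 \<le> j \<and> j \<le> n}) \<le> omega1 k f X"
proof -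
  let ?b = "bseq s k f"
  define ratio where "ratio j = (real (?b (j+1)) - real (?b j) - 1) / real (?b (n+1))" for j
  have ratios: "{(real (?b (j+1)) - real (?b j) - 1) / real (?b (n+1)) | j. 1 \<le> j \<and> j \<le> n}
      = ratio ` {1..n}"
    unfolding ratio_def by auto
  have "Max (ratio ` {1..n}) \<in> ratio ` {1..n}" using n by (intro Max_in) auto
  then obtain j where j: "j \<in> {1..n}" and max: "Max (ratio ` {1..n}) = ratio j"
    by (metis imageE)
  define g where "g = ?b (j+1) - ?b j - 1"
  have step: "?b j < ?b (j+1)" using bseq_less_iff[OF inf] j by simp
  have ratio_j: "ratio j = real g / real (?b (n+1))"
    unfolding ratio_def g_def using step by (simp add: of_nat_diff)
  have "ereal (ratio j) \<le> omega1 k f X"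
  proof (rule omega1_ge_if_zero_digits[OF s, of k "?b j" g])
    show "digit s (f i) p = 0" if "i \<in> {1..k}" "?b j < p" "p \<le> ?b j + g" for i p
      using digit_zero_between_bseq[OF inf that(1), of j p] j step that unfolding g_def by auto
    have "?b j \<le> ?b n" using bseq_less_iff[OF inf, of n j] j by auto
    then have "real s ^ ?b j \<le> real s ^ ?b n" using s by (intro power_increasing) auto
    then show "real s ^ ?b j \<le> X" using X(1) by linarith
  next
    have "X powr ratio j \<le> (real s ^ ?b (n+1)) powr ratio j"
    proof (rule powr_mono2)
      show "0 \<le> ratio j" by (simp add: ratio_j)
      have "0 < real s ^ ?b n" using s by simp
      then show "0 \<le> X" using X(1) by linarith
    qed (use X(2) in auto)
    also have "\<dots> = real s powr (real (?b (n+1)) * ratio j)"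
      using s by (simp add: powr_realpow[symmetric] powr_powr)
    also have "\<dots> = real s ^ g"
      using s bseq_pos[OF inf, of "n+1"] by (simp add: ratio_j powr_realpow)
    finally show "X powr ratio j \<le> real s ^ g" .
  qed
  then show ?thesis unfolding ratios max .
qed

lemma incseq_bracket:
  fixes a :: "nat \<Rightarrow> 'a::linorder"
  assumes "incseq a" and "a N \<le> x" and "x < a M"
  shows "\<exists>n\<ge>N. a n \<le> x \<and> x < a (Suc n)"
proof -
  define n1 where "n1 = (LEAST n. x < a n)"
  have "x < a n1" unfolding n1_def using assms(3) by (rule LeastI)
  moreover have "N < n1"
  proof (rule ccontr)
    assume "\<not> N < n1"
    then have "a n1 \<le> a N" by (intro incseqD[OF assms(1)]) simp
    then show False using \<open>x < a n1\<close> assms(2) by (metis leD order.trans)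
  qed
  moreover have "\<not> x < a (n1 - 1)"
    using not_less_Least[of "n1 - 1" "\<lambda>n. x < a n"] \<open>N < n1\<close> unfolding n1_def by linarith
  ultimately show ?thesis by (intro exI[of _ "n1 - 1"]) auto
qed

lemma Liminf_sequentially_le_Liminf:
  fixes G :: "nat \<Rightarrow> 'a::complete_linorder" and H :: "'b \<Rightarrow> 'a"
  assumes "\<And>N. eventually (\<lambda>x. \<exists>n\<ge>N. G n \<le> H x) F"
  shows "Liminf sequentially G \<le> Liminf F H"
  unfolding le_Liminf_iff
proof (intro allI impI)
  fix y assume "y < Liminf sequentially G"
  then have "eventually (\<lambda>n. y < G n) sequentially" by (rule less_LiminfD)
  then obtain N where N: "\<And>n. n \<ge> N \<Longrightarrow> y < G n"
    unfolding eventually_sequentially by blast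
  show "eventually (\<lambda>x. y < H x) F"
    using assms[of N]
  proof eventually_elim
    case (elim x)
    then obtain n where "n \<ge> N" and "G n \<le> H x" by blast
    then show ?case using N[of n] by (metis order_less_le_trans)
  qed
qed

lemma gap_liminf_le_omega_hat:
  assumes s: "s \<ge> 2" and inf: "infinite (digit_positions s k f)"
  shows "Liminf sequentially (\<lambda>n. ereal (Max {(real (bseq s k f (j+1)) - real (bseq s k f j) - 1)
      / real (bseq s k f (n+1)) | j. 1 \<le> j \<and> j \<le> n})) \<le> Liminf at_top (omega1 k f)"
proof (rule Liminf_sequentially_le_Liminf)
  fix N
  define a where "a n = real s ^ bseq s k f (Suc n)" for n
  have "incseq a"
    using s inf unfolding a_def bseq_Suc[OF inf] by (intro monoI power_increasing) auto
  have unbounded: "\<exists>M. x < a M" for x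
  proof -
    obtain M where "x < real s ^ M" using real_arch_pow[of "real s" x] s by auto
    also have "\<dots> \<le> a M"
      using s le_enumerate[OF inf] by (simp add: a_def bseq_Suc[OF inf] power_increasing)
    finally show ?thesis ..
  qed
  show "eventually (\<lambda>X. \<exists>n\<ge>N. ereal (Max {(real (bseq s k f (j+1)) - real (bseq s k f j) - 1)
      / real (bseq s k f (n+1)) | j. 1 \<le> j \<and> j \<le> n}) \<le> omega1 k f X) at_top"
    using eventually_ge_at_top[of "a N"]
  proof eventually_elim
    case (elim X)
    then obtain n where "n \<ge> N" "a n \<le> X" "X < a (Suc n)"
      using incseq_bracket[OF \<open>incseq a\<close>] unbounded by blast
    then show ?case
      using max_gap_ratio_le_omega1[OF s inf, of "Suc n" X] by (intro exI[of _ "Suc n"]) (auto simp: a_def)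
  qed
qed

lemma gap_quantity_le_omega_hat:
  assumes "1 \<le> k" and "f 1 \<notin> \<rat>"
  shows "gap_quantity k f \<le> Liminf at_top (omega1 k f)"
  unfolding gap_quantity_def
  using assms by (intro SUP_least gap_liminf_le_omega_hat digit_positions_infinite) auto

lemma omega1_le_omega1_one_minus: "omega1 k f X \<le> omega1 k (\<lambda>i. 1 - f i) X"
  unfolding omega1_def
proof (intro Sup_subset_mono image_mono subsetI CollectI)
  fix \<nu> assume "\<nu> \<in> {\<nu>. \<exists>(x::int) (y::nat \<Rightarrow> int). (x \<noteq> 0 \<or> (\<exists>i\<in>{1..k}. y i \<noteq> 0)) \<and>
      \<bar>real_of_int x\<bar> \<le> X \<and> (\<forall>i\<in>{1..k}. \<bar>f i * real_of_int x - real_of_int (y i)\<bar> \<le> X powr (-\<nu>))}"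
  then obtain x y where "x \<noteq> 0 \<or> (\<exists>i\<in>{1..k}. y i \<noteq> 0)" "\<bar>real_of_int x\<bar> \<le> X"
    "\<forall>i\<in>{1..k}. \<bar>f i * real_of_int x - real_of_int (y i)\<bar> \<le> X powr (-\<nu>)"
    by blast
  moreover have "\<bar>(1 - f i) * real_of_int x - real_of_int (x - y i)\<bar>
      = \<bar>f i * real_of_int x - real_of_int (y i)\<bar>" for i
    by (simp add: algebra_simps abs_minus_commute)
  ultimately show "\<exists>(x::int) (y::nat \<Rightarrow> int). (x \<noteq> 0 \<or> (\<exists>i\<in>{1..k}. y i \<noteq> 0)) \<and>
      \<bar>real_of_int x\<bar> \<le> X \<and>
      (\<forall>i\<in>{1..k}. \<bar>(1 - f i) * real_of_int x - real_of_int (y i)\<bar> \<le> X powr (-\<nu>))"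
    by (intro exI[of _ x] exI[of _ "\<lambda>i. x - y i"]) auto
qed

lemma omega1_one_minus: "omega1 k (\<lambda>i. 1 - f i) = omega1 k f"
  using omega1_le_omega1_one_minus[of k f] omega1_le_omega1_one_minus[of k "\<lambda>i. 1 - f i"]
  by (auto intro: antisym)

theorem proposition2p3:
  fixes k :: nat and \<zeta> :: "nat \<Rightarrow> real"
  assumes "k \<ge> 1"
    and "\<forall>i\<in>{1..k}. 0 < \<zeta> i \<and> \<zeta> i < 1"
    and "\<forall>(c0::real) (c::nat \<Rightarrow> real). c0 \<in> \<rat> \<and> (\<forall>i\<in>{1..k}. c i \<in> \<rat>) \<and>
           c0 + (\<Sum>i=1..k. c i * \<zeta> i) = 0 \<longrightarrow> c0 = 0 \<and> (\<forall>i\<in>{1..k}. c i = 0)"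
  shows "omega_hat k \<zeta> \<ge> max (gap_quantity k \<zeta>) (gap_quantity k (\<lambda>i. 1 - \<zeta> i))"
proof -
  have "\<zeta> 1 \<notin> \<rat>"
  proof
    assume "\<zeta> 1 \<in> \<rat>"
    moreover have "(\<Sum>i=1..k. (if i = 1 then 1 else 0) * \<zeta> i) = (\<Sum>i=1..k. if i = 1 then \<zeta> 1 else 0)"
      by (rule sum.cong) auto
    moreover have "\<dots> = \<zeta> 1" using assms(1) by simp
    ultimately have all_zero: "\<forall>i\<in>{1..k}. (if i = 1 then 1 else 0) = (0::real)"
      using assms(3)[rule_format, of "- \<zeta> 1" "\<lambda>i. if i = 1 then 1 else 0"] by simp
    have "(1::nat) \<in> {1..k}" using assms(1) by simp
    from bspec[OF all_zero this] show False by simp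
  qed
  then have "1 - \<zeta> 1 \<notin> \<rat>"
    by (auto dest: Rats_diff[OF Rats_1])
  then have "gap_quantity k (\<lambda>i. 1 - \<zeta> i) \<le> omega_hat k \<zeta>"
    using gap_quantity_le_omega_hat[OF assms(1), of "\<lambda>i. 1 - \<zeta> i"]
    by (simp add: omega_hat_def omega1_one_minus)
  moreover have "gap_quantity k \<zeta> \<le> omega_hat k \<zeta>"
    unfolding omega_hat_def by (rule gap_quantity_le_omega_hat) fact+
  ultimately show ?thesis by simp
qed

end
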